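(* Let $n\ge2$, $c\in(0,\infty)$, and let $\Sigma_n\in\mathbb{R}^{n\times n}$ have entries $(\Sigma_n)_{ij}=\frac{\pi}{i+j}+\frac{4c\pi^2}{(i+1)(j+1)}$ if $c\in(0,1]$ and $(\Sigma_n)_{ij}=\frac{\pi}{c(i+j)}+\frac{4\pi^2}{(i+1)(j+1)}$ if $c\in(1,\infty)$. Then for $c\in(0,1]$ $$\det(\Sigma_n)=\frac{\pi(1+2c\pi)}{2}\prod_{i=2}^n\frac{\pi\prod_{k=1}^{i-1}(i-k)^2}{2i\prod_{k=1}^{i-1}(i+k)^2},$$ and for $c\in(1,\infty)$ $$\det(\Sigma_n)=\frac{\pi(1+2c\pi)}{2c^n}\prod_{i=2}^n\frac{\pi\prod_{k=1}^{i-1}(i-k)^2}{2i\prod_{k=1}^{i-1}(i+k)^2}.$$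
   Context: $\Sigma_n$ is the asymptotic covariance matrix, in the critical regime $t\delta_t^d\to c$, of the vector $(\tilde L_t^{(0)},\dots,\tilde L_t^{(n-1)})$ of normalized length power functionals in dimension $d=2$ for a window of volume $1$. *)

theory Defs
  imports Complex_Main "Jordan_Normal_Form.Determinant"
begin

text \<open>The matrix Sigma_n with 1-based paper indices i, j in 1..n; the
  Jordan_Normal_Form matrix is 0-based, so entry (a,b) is the paper's
  entry (a+1, b+1).\<close>

definition Sigma_entry :: "real \<Rightarrow> nat \<Rightarrow> nat \<Rightarrow> real" where
  "Sigma_entry c i j =
     (if c \<le> 1 then pi / real (i + j) + 4 * c * pi^2 / (real (i + 1) * real (j + 1))
      else pi / (c * real (i + j)) + 4 * pi^2 / (real (i + 1) * real (j + 1)))"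

definition Sigma :: "nat \<Rightarrow> real \<Rightarrow> real mat" where
  "Sigma n c = mat n n (\<lambda>(a, b). Sigma_entry c (a + 1) (b + 1))"

end

theory Submission
  imports Defs
begin

(* In both regimes Sigma_n = p H + q u u^T, where H = (1/(i+j)) is the shifted Hilbert
   matrix and u = H e_1 its first column, so Sigma_n = H (p I + q e_1 u^T) and the second
   factor is triangular with determinant (p + q/2) p^(n-1).  H is a Cauchy matrix: the
   Schur complement of its last entry is again a Cauchy matrix with rescaled rows and
   columns, and the resulting recursion produces one factor of the product per size. *)

lemma det_mat_scale_rows_cols:
  fixes a b :: "nat \<Rightarrow> 'a :: comm_ring_1"
  shows "det (mat n n (\<lambda>(i, j). a i * b j * f (i, j))) =
    (\<Prod>i<n. a i) * (\<Prod>j<n. b j) * det (mat n n f)"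
proof -
  have "signof p * (\<Prod>i<n. a i * b (p i) * f (i, p i)) =
      (\<Prod>i<n. a i) * (\<Prod>j<n. b j) * (signof p * (\<Prod>i<n. f (i, p i)))"
    if "p permutes {..<n}" for p
  proof -
    have "(\<Prod>i<n. b (p i)) = (\<Prod>j<n. b j)"
      using prod.permute[OF that, of b] by (simp add: comp_def)
    then show ?thesis by (simp add: prod.distrib)
  qed
  then show ?thesis
    by (simp add: det_def'[of _ n] atLeast0LessThan sum_distrib_left)
qed

lemma det_mat_Suc_schur_complement:
  fixes f :: "nat \<times> nat \<Rightarrow> 'a :: field"
  assumes pivot: "f (n, n) \<noteq> 0"
  shows "det (mat (Suc n) (Suc n) f) =
    f (n, n) * det (mat n n (\<lambda>(i, j). f (i, j) - f (i, n) * f (n, j) / f (n, n)))"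
proof -
  define A where "A = mat (Suc n) (Suc n) f"
  define E :: "'a mat" where "E = mat (Suc n) (Suc n)
    (\<lambda>(i, k). if i = k then 1 else if k = n then - f (i, n) / f (n, n) else 0)"
  define B :: "'a mat" where "B = mat (Suc n) (Suc n)
    (\<lambda>(i, j). if i < n then f (i, j) - f (i, n) * f (n, j) / f (n, n) else f (n, j))"
  have A: "A \<in> carrier_mat (Suc n) (Suc n)" and E: "E \<in> carrier_mat (Suc n) (Suc n)"
    and B: "B \<in> carrier_mat (Suc n) (Suc n)"
    by (auto simp: A_def E_def B_def)
  have "E * A = B"
  proof (rule eq_matI)
    fix i j assume "i < dim_row B" "j < dim_col B"
    then have i: "i < Suc n" and j: "j < Suc n" by (auto simp: B_def)
    have "(E * A) $$ (i, j) = (\<Sum>k<Suc n. E $$ (i, k) * A $$ (k, j))"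
      using i j A E by (simp add: scalar_prod_def atLeast0LessThan)
    also have "\<dots> = (\<Sum>k<Suc n. (if k = i then f (i, j) else 0)
        + (if k = n \<and> i \<noteq> n then - f (i, n) / f (n, n) * f (n, j) else 0))"
      by (rule sum.cong) (use i j in \<open>auto simp: E_def A_def\<close>)
    also have "\<dots> = B $$ (i, j)"
      using i j by (auto simp: sum.distrib B_def less_Suc_eq)
    finally show "(E * A) $$ (i, j) = B $$ (i, j)" .
  qed (use A E in \<open>auto simp: B_def\<close>)
  moreover have "det E = 1"
    by (subst det_upper_triangular[OF _ E]) (auto simp: upper_triangular_def E_def prod_list_diag_prod)
  ultimately have "det A = det B"
    using det_mult[OF E A] by simp
  also have "\<dots> = (\<Sum>i<Suc n. B $$ (i, n) * cofactor B i n)"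
    by (rule laplace_expansion_column[OF B]) simp
  also have "\<dots> = f (n, n) * cofactor B n n"
    using pivot by (simp add: B_def)
  also have "cofactor B n n = det (mat n n (\<lambda>(i, j). f (i, j) - f (i, n) * f (n, j) / f (n, n)))"
  proof -
    have "mat_delete B n n = mat n n (\<lambda>(i, j). f (i, j) - f (i, n) * f (n, j) / f (n, n))"
      by (rule eq_matI) (auto simp: B_def mat_delete_def)
    then show ?thesis by (simp add: cofactor_def)
  qed
  finally show ?thesis by (simp add: A_def)
qed

definition cauchy_mat :: "(nat \<Rightarrow> 'a :: field) \<Rightarrow> (nat \<Rightarrow> 'a) \<Rightarrow> nat \<Rightarrow> 'a mat" where
  "cauchy_mat x y n = mat n n (\<lambda>(i, j). 1 / (x i + y j))"

lemma cauchy_schur_complement_entry: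
  fixes xi xn yj yn :: "'a :: field"
  assumes "xi + yj \<noteq> 0" "xn + yj \<noteq> 0" "xi + yn \<noteq> 0" "xn + yn \<noteq> 0"
  shows "1 / (xi + yj) - 1 / (xi + yn) * (1 / (xn + yj)) / (1 / (xn + yn)) =
    (xn - xi) / (xi + yn) * ((yn - yj) / (xn + yj)) * (1 / (xi + yj))"
  using assms by (simp add: divide_simps) (simp add: algebra_simps)

lemma det_cauchy_mat_Suc:
  fixes x y :: "nat \<Rightarrow> 'a :: field"
  assumes nonzero: "\<And>i j. x i + y j \<noteq> 0"
  shows "det (cauchy_mat x y (Suc n)) = 1 / (x n + y n) *
    (\<Prod>i<n. (x n - x i) / (x i + y n)) * (\<Prod>j<n. (y n - y j) / (x n + y j)) *
    det (cauchy_mat x y n)"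
proof -
  have pivot: "1 / (x n + y n) \<noteq> 0"
    using nonzero by simp
  have "det (cauchy_mat x y (Suc n)) = 1 / (x n + y n) *
      det (mat n n (\<lambda>(i, j). (x n - x i) / (x i + y n) * ((y n - y j) / (x n + y j)) *
        (1 / (x i + y j))))"
    unfolding cauchy_mat_def
    by (subst det_mat_Suc_schur_complement)
      (simp_all only: pivot not_False_eq_True prod.case
        cauchy_schur_complement_entry[OF nonzero nonzero nonzero nonzero])
  also have "\<dots> = 1 / (x n + y n) *
      ((\<Prod>i<n. (x n - x i) / (x i + y n)) * (\<Prod>j<n. (y n - y j) / (x n + y j)) *
      det (cauchy_mat x y n))"
    unfolding cauchy_mat_def
    using det_mat_scale_rows_cols[where a = "\<lambda>i. (x n - x i) / (x i + y n)"
        and b = "\<lambda>j. (y n - y j) / (x n + y j)" and n = n and f = "\<lambda>(i, j). 1 / (x i + y j)"]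
    by (simp only: prod.case)
  finally show ?thesis
    by (simp only: mult.assoc)
qed

lemma det_rank_one_update_first_col:
  fixes f :: "nat \<times> nat \<Rightarrow> 'a :: comm_ring_1"
  assumes "0 < n"
  shows "det (mat n n (\<lambda>(i, j). p * f (i, j) + f (i, 0) * v j)) =
    (p + v 0) * p ^ (n - 1) * det (mat n n f)"
proof -
  define F where "F = mat n n f"
  define G :: "'a mat" where
    "G = mat n n (\<lambda>(k, j). (if k = j then p else 0) + (if k = 0 then v j else 0))"
  have F: "F \<in> carrier_mat n n" and G: "G \<in> carrier_mat n n"
    by (auto simp: F_def G_def)
  have "mat n n (\<lambda>(i, j). p * f (i, j) + f (i, 0) * v j) = F * G"
  proof (rule eq_matI)
    fix i j assume "i < dim_row (F * G)" "j < dim_col (F * G)"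
    then have i: "i < n" and j: "j < n" using F G by auto
    have "(F * G) $$ (i, j) = (\<Sum>k<n. F $$ (i, k) * G $$ (k, j))"
      using i j F G by (simp add: scalar_prod_def atLeast0LessThan)
    also have "\<dots> = (\<Sum>k<n. (if k = j then p * f (i, k) else 0)
        + (if k = 0 then f (i, k) * v j else 0))"
      by (rule sum.cong) (use i j in \<open>auto simp: F_def G_def algebra_simps\<close>)
    also have "\<dots> = p * f (i, j) + f (i, 0) * v j"
      using j assms by (simp add: sum.distrib)
    finally show "mat n n (\<lambda>(i, j). p * f (i, j) + f (i, 0) * v j) $$ (i, j) = (F * G) $$ (i, j)"
      using i j by simp
  qed (use F G in auto)
  moreover have "det G = (p + v 0) * p ^ (n - 1)"
  proof -
    have "det G = (\<Prod>k<n. p + (if k = 0 then v k else 0))"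
      by (subst det_upper_triangular[OF _ G])
        (auto simp: upper_triangular_def G_def prod_list_diag_prod atLeast0LessThan)
    also have "\<dots> = (p + v 0) * p ^ (n - 1)"
      using assms by (cases n) (simp_all add: prod.lessThan_Suc_shift del: prod.lessThan_Suc)
    finally show ?thesis .
  qed
  ultimately show ?thesis
    using det_mult[OF F G] by (simp add: F_def mult.commute)
qed

definition hilbert_det_factor :: "nat \<Rightarrow> real" where
  "hilbert_det_factor i = (\<Prod>k = 1..i - 1. (real i - real k)^2) /
     (2 * real i * (\<Prod>k = 1..i - 1. (real i + real k)^2))"

lemma hilbert_det_factor_Suc:
  "hilbert_det_factor (Suc n) =
    1 / (2 * (real n + 1)) * (\<Prod>i<n. (real n - real i) / (real n + real i + 2))^2"
proof -
  have "(\<Prod>k = 1..n. (real (Suc n) - real k)^2) = (\<Prod>i<n. (real n - real i)^2)"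
    and "(\<Prod>k = 1..n. (real (Suc n) + real k)^2) = (\<Prod>i<n. (real n + real i + 2)^2)"
    by (simp_all add: prod.atLeast1_atMost_eq algebra_simps)
  then show ?thesis
    by (simp add: hilbert_det_factor_def power_divide prod_dividef prod_power_distrib)
qed

lemma det_shifted_hilbert:
  "det (cauchy_mat (\<lambda>i. real i + 1) (\<lambda>i. real i + 1) n) = (\<Prod>i = 1..n. hilbert_det_factor i)"
proof (induction n)
  case 0
  then show ?case by (simp add: cauchy_mat_def det_def')
next
  case (Suc n)
  have "(\<Prod>i<n. (real n + 1 - (real i + 1)) / (real i + 1 + (real n + 1))) =
      (\<Prod>i<n. (real n - real i) / (real n + real i + 2))"
    and "(\<Prod>j<n. (real n + 1 - (real j + 1)) / (real n + 1 + (real j + 1))) =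
      (\<Prod>i<n. (real n - real i) / (real n + real i + 2))"
    by (simp_all add: algebra_simps)
  then have "det (cauchy_mat (\<lambda>i. real i + 1) (\<lambda>i. real i + 1) (Suc n)) =
      hilbert_det_factor (Suc n) * det (cauchy_mat (\<lambda>i. real i + 1) (\<lambda>i. real i + 1) n)"
    by (subst det_cauchy_mat_Suc) (simp_all add: add_pos_pos hilbert_det_factor_Suc power2_eq_square)
  then show ?case
    by (simp add: Suc.IH prod.nat_ivl_Suc')
qed

lemma prod_hilbert_det_factor_scaled:
  "(\<Prod>i = 2..n. a * (\<Prod>k = 1..i - 1. (real i - real k)^2) /
      (2 * real i * (\<Prod>k = 1..i - 1. (real i + real k)^2))) =
    a ^ (n - 1) * (\<Prod>i = 2..n. hilbert_det_factor i)"
proof -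
  have "(\<Prod>i = 2..n. a * (\<Prod>k = 1..i - 1. (real i - real k)^2) /
      (2 * real i * (\<Prod>k = 1..i - 1. (real i + real k)^2))) =
      (\<Prod>i = 2..n. a * hilbert_det_factor i)"
    by (simp add: hilbert_det_factor_def)
  then show ?thesis
    by (simp add: prod.distrib)
qed

lemma det_shifted_hilbert_rank_one_update:
  assumes "0 < n"
  shows "det (mat n n (\<lambda>(i, j). p / real (i + j + 2) + q / (real (i + 2) * real (j + 2)))) =
    (p + q / 2) * p ^ (n - 1) / 2 * (\<Prod>i = 2..n. hilbert_det_factor i)"
proof -
  define f where "f = (\<lambda>(i, j). 1 / (real i + 1 + (real j + 1)))"
  have "mat n n (\<lambda>(i, j). p / real (i + j + 2) + q / (real (i + 2) * real (j + 2))) =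
      mat n n (\<lambda>(i, j). p * f (i, j) + f (i, 0) * (q * f (j, 0)))"
    by (rule eq_matI) (auto simp: f_def add_ac)
  moreover have "det (mat n n f) = (\<Prod>i = 1..n. hilbert_det_factor i)"
    using det_shifted_hilbert[of n] by (simp add: f_def cauchy_mat_def)
  moreover have "(\<Prod>i = 1..n. hilbert_det_factor i) = (\<Prod>i = 2..n. hilbert_det_factor i) / 2"
    using assms by (simp add: prod.atLeast_Suc_atMost numeral_2_eq_2 hilbert_det_factor_def)
  ultimately show ?thesis
    using det_rank_one_update_first_col[OF assms, of p f "\<lambda>j. q * f (j, 0)"]
    by (simp add: f_def)
qed

theorem corollary7p12:
  fixes n :: nat and c :: real
  assumes "n \<ge> 2" and "c > 0"
  shows "(c \<le> 1 \<longrightarrow>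
           det (Sigma n c) =
             pi * (1 + 2 * c * pi) / 2 *
             (\<Prod>i = 2..n. pi * (\<Prod>k = 1..i - 1. (real i - real k)^2) /
                  (2 * real i * (\<Prod>k = 1..i - 1. (real i + real k)^2))))
       \<and> (c > 1 \<longrightarrow>
           det (Sigma n c) =
             pi * (1 + 2 * c * pi) / (2 * c ^ n) *
             (\<Prod>i = 2..n. pi * (\<Prod>k = 1..i - 1. (real i - real k)^2) /
                  (2 * real i * (\<Prod>k = 1..i - 1. (real i + real k)^2))))"
proof -
  define H where "H = (\<Prod>i = 2..n. hilbert_det_factor i)"
  have n: "0 < n" using assms(1) by simp
  have "det (Sigma n c) = (pi + 4 * c * pi^2 / 2) * pi ^ (n - 1) / 2 * H" if "c \<le> 1"
  proof -
    have "Sigma n c = mat n n (\<lambda>(i, j).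
        pi / real (i + j + 2) + 4 * c * pi^2 / (real (i + 2) * real (j + 2)))"
      using that by (auto simp: Sigma_def Sigma_entry_def add_ac intro!: eq_matI)
    then show ?thesis
      unfolding H_def by (simp only: det_shifted_hilbert_rank_one_update[OF n])
  qed
  moreover have "det (Sigma n c) = (pi / c + 4 * pi^2 / 2) * (pi / c) ^ (n - 1) / 2 * H" if "c > 1"
  proof -
    have "Sigma n c = mat n n (\<lambda>(i, j).
        pi / c / real (i + j + 2) + 4 * pi^2 / (real (i + 2) * real (j + 2)))"
      using that by (auto simp: Sigma_def Sigma_entry_def add_ac intro!: eq_matI)
    then show ?thesis
      unfolding H_def by (simp only: det_shifted_hilbert_rank_one_update[OF n])
  qed
  moreover have "c ^ n = c * c ^ (n - 1)"
    using n by (simp add: power_eq_if)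
  ultimately show ?thesis
    using assms(2) unfolding prod_hilbert_det_factor_scaled H_def[symmetric]
    by (simp add: power_divide power2_eq_square field_simps)
qed

end
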